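(* Let $\pi$ be a permutation-invariant probability density on $\mathbb{X}^n$ and $q$ a probability density on $\mathbb{X}$. For any $x\in\mathbb{X}^n$ and $y\in\mathbb{X}$, $$\sum_{i=1}^n\frac{w_i(y,x)}{W(y,x)}\,\alpha_i^{\mathrm{SOMA}}(y,x)\;\ge\;\sum_{i=1}^n\frac1n\,\alpha_i^{\mathrm{IMwG}}(y,x).$$
   Context: Permutation invariance: $\pi(x_{\sigma(1)},\dots,x_{\sigma(n)})=\pi(x)$ for all permutations $\sigma$. $[x_{-i},y]$ is $x$ with its $i$-th component replaced by $y$. Weights: $w_i(y,x)=\pi([x_{-i},y])/\big(q(y)\prod_{j\ne i}q(x_j)\big)$ ($1\le i\le n$), $w_0(y,x)=\pi(x)/\prod_j q(x_j)$, $W(y,x)=\sum_{i=1}^n w_i(y,x)$ (well-defined, positive). $\alpha_i^{\mathrm{SOMA}}(y,x)=\min\{1,W/(W+w_0-w_i)\}$ and $\alpha_i^{\mathrm{IMwG}}(y,x)=\min\{1,w_i(y,x)/w_0(y,x)\}$. *)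

theory Defs
  imports "HOL-Probability.Probability" "HOL-Combinatorics.Permutations"
begin

text \<open>Points of X^n are extensional functions on the index set {..<n}
  (elements of space (PiM {..<n} (\<lambda>_. M))); component i of the paper
  is component i-1 here. [x_{-i},y] is the function update x(i := y).\<close>

definition perm_invariant :: "nat \<Rightarrow> ((nat \<Rightarrow> 'a) \<Rightarrow> real) \<Rightarrow> bool" where
  "perm_invariant n \<pi> \<longleftrightarrow> (\<forall>\<sigma> x. \<sigma> permutes {..<n} \<longrightarrow> x \<in> extensional {..<n} \<longrightarrow> \<pi> (x \<circ> \<sigma>) = \<pi> x)"

definition prob_density :: "'b measure \<Rightarrow> ('b \<Rightarrow> real) \<Rightarrow> bool" where
  "prob_density N f \<longleftrightarrow> f \<in> borel_measurable N \<and> (\<forall>z\<in>space N. 0 \<le> f z)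
     \<and> (\<integral>\<^sup>+ z. ennreal (f z) \<partial>N) = 1"

definition wi :: "nat \<Rightarrow> ((nat \<Rightarrow> 'a) \<Rightarrow> real) \<Rightarrow> ('a \<Rightarrow> real) \<Rightarrow> nat \<Rightarrow> 'a \<Rightarrow> (nat \<Rightarrow> 'a) \<Rightarrow> real" where
  "wi n \<pi> q i y x = \<pi> (x(i := y)) / (q y * (\<Prod>j\<in>{..<n} - {i}. q (x j)))"

definition w0 :: "nat \<Rightarrow> ((nat \<Rightarrow> 'a) \<Rightarrow> real) \<Rightarrow> ('a \<Rightarrow> real) \<Rightarrow> 'a \<Rightarrow> (nat \<Rightarrow> 'a) \<Rightarrow> real" where
  "w0 n \<pi> q y x = \<pi> x / (\<Prod>j<n. q (x j))"

definition WW :: "nat \<Rightarrow> ((nat \<Rightarrow> 'a) \<Rightarrow> real) \<Rightarrow> ('a \<Rightarrow> real) \<Rightarrow> 'a \<Rightarrow> (nat \<Rightarrow> 'a) \<Rightarrow> real" where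
  "WW n \<pi> q y x = (\<Sum>i<n. wi n \<pi> q i y x)"

definition alpha_SOMA :: "nat \<Rightarrow> ((nat \<Rightarrow> 'a) \<Rightarrow> real) \<Rightarrow> ('a \<Rightarrow> real) \<Rightarrow> nat \<Rightarrow> 'a \<Rightarrow> (nat \<Rightarrow> 'a) \<Rightarrow> real" where
  "alpha_SOMA n \<pi> q i y x = min 1 (WW n \<pi> q y x /
      (WW n \<pi> q y x + w0 n \<pi> q y x - wi n \<pi> q i y x))"

definition alpha_IMwG :: "nat \<Rightarrow> ((nat \<Rightarrow> 'a) \<Rightarrow> real) \<Rightarrow> ('a \<Rightarrow> real) \<Rightarrow> nat \<Rightarrow> 'a \<Rightarrow> (nat \<Rightarrow> 'a) \<Rightarrow> real" where
  "alpha_IMwG n \<pi> q i y x = min 1 (wi n \<pi> q i y x / w0 n \<pi> q y x)"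

end

theory Submission
  imports Defs
begin

text \<open>With \<open>c = w\<^sub>0 > 0\<close>, \<open>w\<^sub>i \<ge> 0\<close>, \<open>W = \<Sum>\<^sub>i w\<^sub>i > 0\<close>, the
  i-th SOMA term is \<open>w\<^sub>i / (W - w\<^sub>i + max w\<^sub>i c)\<close>, and every such denominator is at most
  \<open>P = \<Sum>\<^sub>j max w\<^sub>j c\<close>; so the left side is at least \<open>W / P\<close>. The right side is \<open>Q / (n c)\<close>
  with \<open>Q = \<Sum>\<^sub>j min w\<^sub>j c\<close>. Since \<open>P + Q = W + n c\<close> and \<open>P \<ge> W\<close>, \<open>P \<ge> n c\<close>, we get
  \<open>W n c - P Q = (P - W) (P - n c) \<ge> 0\<close>, i.e. \<open>W / P \<ge> Q / (n c)\<close>.\<close>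

lemma product_le_of_sum_eq_sum:
  fixes P Q W C :: real
  assumes "P + Q = W + C" "W \<le> P" "C \<le> P"
  shows "P * Q \<le> W * C"
proof -
  have "W * C - P * Q = (P - W) * (P - C) + P * (W + C - P - Q)"
    by (simp add: algebra_simps)
  also have "\<dots> = (P - W) * (P - C)"
    using assms(1) by simp
  finally have "W * C - P * Q = (P - W) * (P - C)" .
  moreover have "(P - W) * (P - C) \<ge> 0"
    using assms(2,3) by simp
  ultimately show ?thesis by linarith
qed

lemma soma_term_eq:
  fixes w W c :: real
  assumes "0 \<le> w" "w \<le> W" "0 < W" "0 < c"
  shows "w / W * min 1 (W / (W + c - w)) = w / (W - w + max w c)"
proof (cases "c \<le> w")
  case True
  then have "W / (W + c - w) \<ge> 1"
    using assms by (simp add: field_simps)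
  then show ?thesis using True by (simp add: max_def)
next
  case False
  then have "W / (W + c - w) < 1"
    using assms by (simp add: field_simps)
  then show ?thesis using False assms by (simp add: max_def)
qed

lemma imwg_term_eq:
  fixes w c :: real
  assumes "0 < c"
  shows "min 1 (w / c) = min w c / c"
  using assms by (simp add: min_def field_simps)

lemma soma_weighted_ge_imwg_average:
  fixes w :: "'i \<Rightarrow> real" and c :: real
  assumes I: "finite I" and c: "0 < c" and w: "\<And>i. i \<in> I \<Longrightarrow> 0 \<le> w i"
    and W: "0 < sum w I"
  shows "(\<Sum>i\<in>I. w i / sum w I * min 1 (sum w I / (sum w I + c - w i)))
           \<ge> (\<Sum>i\<in>I. 1 / real (card I) * min 1 (w i / c))"
proof -
  define P where "P = (\<Sum>j\<in>I. max (w j) c)"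
  define Q where "Q = (\<Sum>j\<in>I. min (w j) c)"
  define N where "N = real (card I) * c"
  have "I \<noteq> {}" using W by auto
  then have N_pos: "0 < N" using I c by (simp add: N_def card_gt_0_iff)
  have W_le_P: "sum w I \<le> P" unfolding P_def by (intro sum_mono) simp
  have N_le_P: "N \<le> P" unfolding P_def N_def using sum_mono[of I "\<lambda>_. c"] by simp
  have P_pos: "0 < P" using W W_le_P by linarith
  have PQ: "P + Q = sum w I + N"
  proof -
    have "P + Q = (\<Sum>j\<in>I. w j + c)"
      unfolding P_def Q_def sum.distrib[symmetric] by (intro sum.cong) (auto simp: max_def min_def)
    then show ?thesis by (simp add: sum.distrib N_def)
  qed
  have denominator_le: "sum w I - w i + max (w i) c \<le> P" if i: "i \<in> I" for i
  proof -
    have "sum w (I - {i}) \<le> (\<Sum>j\<in>I - {i}. max (w j) c)" by (intro sum_mono) simp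
    then show ?thesis using I i by (simp add: P_def sum.remove)
  qed
  have w_le_W: "w i \<le> sum w I" if "i \<in> I" for i
    using I w that by (intro member_le_sum) auto
  have "(\<Sum>i\<in>I. w i / sum w I * min 1 (sum w I / (sum w I + c - w i)))
          = (\<Sum>i\<in>I. w i / (sum w I - w i + max (w i) c))"
    using W c w w_le_W by (intro sum.cong soma_term_eq) auto
  also have "\<dots> \<ge> (\<Sum>i\<in>I. w i / P)"
  proof (intro sum_mono divide_left_mono)
    fix i assume "i \<in> I"
    then show "0 < P * (sum w I - w i + max (w i) c)"
      using P_pos w_le_W[of i] c by (intro mult_pos_pos) auto
  qed (use denominator_le w in auto)
  also have "(\<Sum>i\<in>I. w i / P) = sum w I / P"
    by (simp add: sum_divide_distrib)
  also have "sum w I / P \<ge> Q / N"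
    using product_le_of_sum_eq_sum[OF PQ W_le_P N_le_P] P_pos N_pos
    by (simp add: divide_simps mult.commute)
  also have "Q / N = (\<Sum>i\<in>I. 1 / real (card I) * min 1 (w i / c))"
    using c by (simp add: imwg_term_eq Q_def N_def sum_divide_distrib)
  finally show ?thesis .
qed

lemma fun_upd_in_space_PiM:
  assumes "x \<in> space (PiM I M)" "i \<in> I" "y \<in> space (M i)"
  shows "x(i := y) \<in> space (PiM I M)"
  using PiE_fun_upd[of y "\<lambda>i. space (M i)" i x I] assms by (simp add: space_PiM insert_absorb)

lemma wi_denominator_pos:
  fixes q :: "'a \<Rightarrow> real"
  assumes "\<forall>z\<in>space M. q z > 0" "x \<in> space (PiM {..<n} (\<lambda>_. M))" "y \<in> space M"
  shows "0 < q y * (\<Prod>j\<in>{..<n} - {i}. q (x j))"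
  using assms by (intro mult_pos_pos prod_pos) (auto simp: space_PiM)

theorem lemma3:
  fixes M :: "'a measure" and n :: nat and \<pi> :: "(nat \<Rightarrow> 'a) \<Rightarrow> real" and q :: "'a \<Rightarrow> real"
    and x :: "nat \<Rightarrow> 'a" and y :: 'a
  assumes n: "n \<ge> 1"
    and pi_dens: "prob_density (PiM {..<n} (\<lambda>_. M)) \<pi>"
    and pi_inv: "perm_invariant n \<pi>"
    and q_dens: "prob_density M q"
    and q_pos: "\<forall>z\<in>space M. q z > 0"
    and x: "x \<in> space (PiM {..<n} (\<lambda>_. M))" and y: "y \<in> space M"
    and pi_x_pos: "\<pi> x > 0"
    and W_pos: "\<exists>i<n. \<pi> (x(i := y)) > 0"
  shows "(\<Sum>i<n. wi n \<pi> q i y x / WW n \<pi> q y x * alpha_SOMA n \<pi> q i y x)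
           \<ge> (\<Sum>i<n. 1 / real n * alpha_IMwG n \<pi> q i y x)"
proof -
  have pi_nonneg: "0 \<le> \<pi> (x(i := y))" if "i < n" for i
    using pi_dens fun_upd_in_space_PiM[OF x _ y] that by (simp add: prob_density_def)
  have w_nonneg: "0 \<le> wi n \<pi> q i y x" if "i < n" for i
    using pi_nonneg[OF that] wi_denominator_pos[OF q_pos x y]
    unfolding wi_def by (intro divide_nonneg_pos)
  have w0_pos: "0 < w0 n \<pi> q y x"
    using pi_x_pos q_pos x by (auto simp: w0_def space_PiM intro!: divide_pos_pos prod_pos)
  obtain i0 where i0: "i0 < n" "0 < \<pi> (x(i0 := y))" using W_pos by blast
  then have "0 < wi n \<pi> q i0 y x"
    using wi_denominator_pos[OF q_pos x y] by (simp add: wi_def)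
  then have "0 < (\<Sum>i<n. wi n \<pi> q i y x)"
    using i0 w_nonneg by (intro sum_pos2) auto
  then show ?thesis
    using soma_weighted_ge_imwg_average[of "{..<n}" "w0 n \<pi> q y x" "\<lambda>i. wi n \<pi> q i y x"]
      w0_pos w_nonneg
    by (simp add: alpha_SOMA_def alpha_IMwG_def WW_def)
qed

end
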